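(* Let $\mathcal I$ be an ideal of a Poisson $n$-Lie algebra $\mathcal P$ of arbitrary dimension. Define $\mathcal I^{1)}=\mathcal I$, $\mathcal I^{k+1)}=\mathcal I^{k)}\cdot\mathcal I$, and $\mathcal I^{(1}=\mathcal I$, $\mathcal I^{(k+1}=[\mathcal I^{(k},\mathcal I,\mathcal P,\dots,\mathcal P]$ for $k\ge1$. Then for every $k\ge1$, $$\mathcal I^k\subseteq\sum_{r_1+\cdots+r_t=k}\mathcal I^{r_1)}\cdot\prod_{i=2}^t\mathcal I^{(r_i},$$ where the sum is over all $t\ge1$ and nonnegative integers $r_1,\dots,r_t$ with $r_1+\cdots+r_t=k$, and factors $\mathcal I^{0)}$, $\mathcal I^{(0}$ are understood to act trivially (multiplication by them leaves the other factor unchanged).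
   Context: A Poisson $n$-Lie algebra is a commutative associative algebra $(\mathcal P,\cdot)$ with an $n$-linear skew-symmetric bracket satisfying the fundamental identity $[x_1,\dots,x_{n-1},[y_1,\dots,y_n]]=\sum_{i=1}^n[y_1,\dots,[x_1,\dots,x_{n-1},y_i],\dots,y_n]$ and the Leibniz rule $[y\cdot z,x_2,\dots,x_n]=y\cdot[z,x_2,\dots,x_n]+z\cdot[y,x_2,\dots,x_n]$. For subspaces, products and brackets denote linear spans. An ideal $\mathcal I$ satisfies $\mathcal P\cdot\mathcal I\subseteq\mathcal I$, $[\mathcal I,\mathcal P,\dots,\mathcal P]\subseteq\mathcal I$. Lower central series: $\mathcal I^1=\mathcal I$, $\mathcal I^{k+1}=[\mathcal I^k,\mathcal I,\mathcal P,\dots,\mathcal P]+\mathcal I^k\cdot\mathcal I$. *)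

theory Defs
  imports Complex_Main
begin

text \<open>A Poisson n-Lie algebra over a field: the underlying vector space is the whole
type 'v (scalar multiplication scale), mul is the commutative associative bilinear
product, and br is the n-ary bracket, applied to lists of length n.\<close>

definition poisson_nlie ::
  "('k::field \<Rightarrow> 'v::ab_group_add \<Rightarrow> 'v) \<Rightarrow> ('v \<Rightarrow> 'v \<Rightarrow> 'v) \<Rightarrow> nat \<Rightarrow> ('v list \<Rightarrow> 'v) \<Rightarrow> bool" where
  "poisson_nlie scale mul n br \<longleftrightarrow>
     vector_space scale \<and>
     \<comment> \<open>bilinear, commutative, associative product\<close>
     (\<forall>x y z. mul (x + y) z = mul x z + mul y z) \<and>
     (\<forall>a x y. mul (scale a x) y = scale a (mul x y)) \<and>
     (\<forall>x y. mul x y = mul y x) \<and>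
     (\<forall>x y z. mul (mul x y) z = mul x (mul y z)) \<and>
     \<comment> \<open>n-linear bracket\<close>
     (\<forall>xs i y z. length xs = n \<longrightarrow> i < n \<longrightarrow>
        br (xs[i := y + z]) = br (xs[i := y]) + br (xs[i := z])) \<and>
     (\<forall>xs i a y. length xs = n \<longrightarrow> i < n \<longrightarrow>
        br (xs[i := scale a y]) = scale a (br (xs[i := y]))) \<and>
     \<comment> \<open>skew-symmetric\<close>
     (\<forall>xs i j. length xs = n \<longrightarrow> i < n \<longrightarrow> j < n \<longrightarrow> i \<noteq> j \<longrightarrow>
        br (xs[i := xs ! j, j := xs ! i]) = - br xs) \<and>
     \<comment> \<open>fundamental identity\<close>
     (\<forall>xs ys. length xs = n - 1 \<longrightarrow> length ys = n \<longrightarrow>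
        br (xs @ [br ys]) = (\<Sum>i<n. br (ys[i := br (xs @ [ys ! i])]))) \<and>
     \<comment> \<open>Leibniz rule\<close>
     (\<forall>y z xs. length xs = n - 1 \<longrightarrow>
        br (mul y z # xs) = mul y (br (z # xs)) + mul z (br (y # xs)))"

definition sp_mul :: "('k::field \<Rightarrow> 'v::ab_group_add \<Rightarrow> 'v) \<Rightarrow> ('v \<Rightarrow> 'v \<Rightarrow> 'v) \<Rightarrow> 'v set \<Rightarrow> 'v set \<Rightarrow> 'v set" where
  "sp_mul scale mul A B = module.span scale {mul a b | a b. a \<in> A \<and> b \<in> B}"

definition sp_br :: "('k::field \<Rightarrow> 'v::ab_group_add \<Rightarrow> 'v) \<Rightarrow> ('v list \<Rightarrow> 'v) \<Rightarrow> 'v set list \<Rightarrow> 'v set" where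
  "sp_br scale br As = module.span scale {br xs | xs. list_all2 (\<in>) xs As}"

definition sp_sum :: "('k::field \<Rightarrow> 'v::ab_group_add \<Rightarrow> 'v) \<Rightarrow> 'v set \<Rightarrow> 'v set \<Rightarrow> 'v set" where
  "sp_sum scale A B = module.span scale (A \<union> B)"

definition is_ideal ::
  "('k::field \<Rightarrow> 'v::ab_group_add \<Rightarrow> 'v) \<Rightarrow> ('v \<Rightarrow> 'v \<Rightarrow> 'v) \<Rightarrow> nat \<Rightarrow> ('v list \<Rightarrow> 'v) \<Rightarrow> 'v set \<Rightarrow> bool" where
  "is_ideal scale mul n br I \<longleftrightarrow>
     module.subspace scale I \<and>
     sp_mul scale mul UNIV I \<subseteq> I \<and>
     sp_br scale br (I # replicate (n - 1) UNIV) \<subseteq> I"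

text \<open>Lower central series I^k (k \<ge> 1; the value at 0 is irrelevant).\<close>
fun lcs :: "('k::field \<Rightarrow> 'v::ab_group_add \<Rightarrow> 'v) \<Rightarrow> ('v \<Rightarrow> 'v \<Rightarrow> 'v) \<Rightarrow> nat \<Rightarrow> ('v list \<Rightarrow> 'v) \<Rightarrow> 'v set \<Rightarrow> nat \<Rightarrow> 'v set" where
  "lcs scale mul n br I 0 = UNIV"
| "lcs scale mul n br I (Suc 0) = I"
| "lcs scale mul n br I (Suc (Suc k)) =
     sp_sum scale
       (sp_br scale br (lcs scale mul n br I (Suc k) # I # replicate (n - 2) UNIV))
       (sp_mul scale mul (lcs scale mul n br I (Suc k)) I)"

fun mpow :: "('k::field \<Rightarrow> 'v::ab_group_add \<Rightarrow> 'v) \<Rightarrow> ('v \<Rightarrow> 'v \<Rightarrow> 'v) \<Rightarrow> 'v set \<Rightarrow> nat \<Rightarrow> 'v set" where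
  "mpow scale mul I 0 = UNIV"
| "mpow scale mul I (Suc 0) = I"
| "mpow scale mul I (Suc (Suc k)) = sp_mul scale mul (mpow scale mul I (Suc k)) I"

fun bpow :: "('k::field \<Rightarrow> 'v::ab_group_add \<Rightarrow> 'v) \<Rightarrow> nat \<Rightarrow> ('v list \<Rightarrow> 'v) \<Rightarrow> 'v set \<Rightarrow> nat \<Rightarrow> 'v set" where
  "bpow scale n br I 0 = UNIV"
| "bpow scale n br I (Suc 0) = I"
| "bpow scale n br I (Suc (Suc k)) =
     sp_br scale br (bpow scale n br I (Suc k) # I # replicate (n - 2) UNIV)"

text \<open>Left-to-right product of a nonempty list of subspaces (the value on [] is never used).\<close>
fun sp_prod :: "('k::field \<Rightarrow> 'v::ab_group_add \<Rightarrow> 'v) \<Rightarrow> ('v \<Rightarrow> 'v \<Rightarrow> 'v) \<Rightarrow> 'v set list \<Rightarrow> 'v set" where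
  "sp_prod scale mul [] = UNIV"
| "sp_prod scale mul (A # As) = foldl (sp_mul scale mul) A As"

text \<open>The term I^{r_1)} \<cdot> \<Prod>_{i\<ge>2} I^{(r_i} for rs = [r_1,...,r_t]; factors with exponent 0
act trivially, i.e. they are omitted.\<close>
fun rterm :: "('k::field \<Rightarrow> 'v::ab_group_add \<Rightarrow> 'v) \<Rightarrow> ('v \<Rightarrow> 'v \<Rightarrow> 'v) \<Rightarrow> nat \<Rightarrow> ('v list \<Rightarrow> 'v) \<Rightarrow> 'v set \<Rightarrow> nat list \<Rightarrow> 'v set" where
  "rterm scale mul n br I [] = UNIV"
| "rterm scale mul n br I (r1 # rs) =
     sp_prod scale mul
       ((if r1 = 0 then [] else [mpow scale mul I r1]) @
        map (bpow scale n br I) (filter (\<lambda>r. r \<noteq> 0) rs))"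

end

theory Submission
  imports Defs
begin

(* Every element of I^k is a linear combination of products x_1 ... x_t with x_i in I^{(r_i},
   r_i >= 1 and r_1 + ... + r_t = k; this is shown by induction on k. Multiplying such a product
   by an element of I appends a factor from I^{(1}. Bracketing it with an element of I and n - 2
   arbitrary further arguments gives, by the Leibniz rule, a sum of products in each of which
   exactly one factor x_i is replaced by its bracket, an element of I^{(r_i + 1}. *)

lemma (in module_hom) image_span_subset:
  assumes "f ` S \<subseteq> m2.span T"
  shows "f ` m1.span S \<subseteq> m2.span T"
  using assms by (metis span_image m2.span_minimal m2.subspace_span)

lemma list_all2_mem_replicate_UNIV:
  "list_all2 (\<in>) xs (replicate m UNIV) \<longleftrightarrow> length xs = m"
  by (auto simp: list_all2_conv_all_nth)

lemma list_all2_mem_Cons_Cons_replicate_UNIV: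
  "list_all2 (\<in>) xs (A # B # replicate m UNIV) \<longleftrightarrow>
     (\<exists>a b ps. xs = a # b # ps \<and> a \<in> A \<and> b \<in> B \<and> length ps = m)"
  by (auto simp: list_all2_Cons2 list_all2_mem_replicate_UNIV)

lemma sp_prod_snoc:
  "As \<noteq> [] \<Longrightarrow> sp_prod scale mul (As @ [B]) = sp_mul scale mul (sp_prod scale mul As) B"
  by (cases As) simp_all

lemma (in vector_space) mul_mem_sp_mul:
  "a \<in> A \<Longrightarrow> b \<in> B \<Longrightarrow> mul a b \<in> sp_mul scale mul A B"
  unfolding sp_mul_def by (blast intro: span_base)

locale poisson_nlie_algebra =
  fixes scale :: "'k::field \<Rightarrow> 'v::ab_group_add \<Rightarrow> 'v"
    and mul :: "'v \<Rightarrow> 'v \<Rightarrow> 'v"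
    and n :: nat
    and br :: "'v list \<Rightarrow> 'v"
  assumes poisson: "poisson_nlie scale mul n br"
    and two_le_n: "2 \<le> n"
begin

sublocale vector_space scale
  using poisson by (simp add: poisson_nlie_def)

lemma
  shows mul_add_left: "mul (x + y) z = mul x z + mul y z"
    and mul_scale_left: "mul (scale a x) y = scale a (mul x y)"
    and mul_commute: "mul x y = mul y x"
    and bracket_add: "length xs = n \<Longrightarrow> i < n \<Longrightarrow>
          br (xs[i := u + v]) = br (xs[i := u]) + br (xs[i := v])"
    and bracket_scale: "length xs = n \<Longrightarrow> i < n \<Longrightarrow>
          br (xs[i := scale a u]) = scale a (br (xs[i := u]))"
    and leibniz: "length xs = n - 1 \<Longrightarrow>
          br (mul y z # xs) = mul y (br (z # xs)) + mul z (br (y # xs))"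
  using poisson unfolding poisson_nlie_def by (elim conjE; simp)+

lemma module_hom_mul_right: "module_hom scale scale (\<lambda>x. mul x y)"
  by (simp add: module_hom_def module_hom_axioms_def module_axioms mul_add_left mul_scale_left)

lemma module_hom_bracket_first:
  assumes "length xs = n - 1"
  shows "module_hom scale scale (\<lambda>x. br (x # xs))"
proof -
  have "length (x # xs) = n" "0 < n" for x
    using assms two_le_n by auto
  then show ?thesis
    using bracket_add[of "_ # xs" 0] bracket_scale[of "_ # xs" 0]
    by (simp add: module_hom_def module_hom_axioms_def module_axioms)
qed

lemma bracket_mem_bpow_Suc:
  assumes "0 < r" "x \<in> bpow scale n br I r" "i \<in> I" "length ps = n - 2"
  shows "br (x # i # ps) \<in> bpow scale n br I (Suc r)"
proof -
  obtain r' where "r = Suc r'"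
    using assms(1) gr0_implies_Suc by blast
  then show ?thesis
    using assms by (auto simp: sp_br_def list_all2_mem_Cons_Cons_replicate_UNIV intro!: span_base)
qed

inductive bpow_monomial :: "'v set \<Rightarrow> nat \<Rightarrow> 'v \<Rightarrow> bool" for I where
  factor: "0 < r \<Longrightarrow> x \<in> bpow scale n br I r \<Longrightarrow> bpow_monomial I r x"
| mul: "bpow_monomial I m x \<Longrightarrow> 0 < r \<Longrightarrow> y \<in> bpow scale n br I r \<Longrightarrow>
          bpow_monomial I (m + r) (mul x y)"

lemma mul_mem_span_bpow_monomials:
  assumes "z \<in> span {x. bpow_monomial I m x}" "0 < r" "y \<in> bpow scale n br I r"
  shows "mul z y \<in> span {x. bpow_monomial I (m + r) x}"
proof -
  have "(\<lambda>x. mul x y) ` {x. bpow_monomial I m x} \<subseteq> span {x. bpow_monomial I (m + r) x}"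
    using assms by (auto intro: span_base bpow_monomial.mul)
  then show ?thesis
    using module_hom.image_span_subset[OF module_hom_mul_right] assms(1) by blast
qed

lemma bracket_bpow_monomial_mem_span:
  assumes "bpow_monomial I m x" "i \<in> I" "length ps = n - 2"
  shows "br (x # i # ps) \<in> span {x. bpow_monomial I (Suc m) x}"
  using assms(1)
proof induction
  case (factor r x)
  then show ?case
    using assms by (auto intro: span_base bpow_monomial.factor bracket_mem_bpow_Suc)
next
  case (mul m x r y)
  have len: "length (i # ps) = n - 1"
    using assms(3) two_le_n by simp
  have "bpow_monomial I (m + Suc r) (mul x (br (y # i # ps)))"
    using mul assms by (intro bpow_monomial.mul bracket_mem_bpow_Suc) auto
  moreover have "mul (br (x # i # ps)) y \<in> span {x. bpow_monomial I (Suc m + r) x}"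
    using mul by (intro mul_mem_span_bpow_monomials)
  ultimately show ?case
    by (simp add: leibniz[OF len] mul_commute[of y] span_add span_base)
qed

lemma bracket_mem_span_bpow_monomials:
  assumes "z \<in> span {x. bpow_monomial I m x}" "i \<in> I" "length ps = n - 2"
  shows "br (z # i # ps) \<in> span {x. bpow_monomial I (Suc m) x}"
proof -
  have "length (i # ps) = n - 1"
    using assms(3) two_le_n by simp
  moreover have
    "(\<lambda>x. br (x # i # ps)) ` {x. bpow_monomial I m x} \<subseteq> span {x. bpow_monomial I (Suc m) x}"
    using assms by (auto intro: bracket_bpow_monomial_mem_span)
  ultimately show ?thesis
    using module_hom.image_span_subset[OF module_hom_bracket_first] assms(1) by blast
qed

lemma lcs_subset_span_bpow_monomials:
  "lcs scale mul n br I (Suc m) \<subseteq> span {x. bpow_monomial I (Suc m) x}"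
proof (induction m)
  case 0
  show ?case
    using bpow_monomial.factor[of "Suc 0" _ I] by (auto intro: span_base)
next
  case (Suc m)
  let ?L = "lcs scale mul n br I (Suc m)" and ?T = "span {x. bpow_monomial I (Suc (Suc m)) x}"
  have "sp_br scale br (?L # I # replicate (n - 2) UNIV) \<subseteq> ?T"
    unfolding sp_br_def using Suc
    by (intro span_minimal subspace_span)
      (auto simp: list_all2_mem_Cons_Cons_replicate_UNIV intro!: bracket_mem_span_bpow_monomials)
  moreover have "sp_mul scale mul ?L I \<subseteq> ?T"
    unfolding sp_mul_def using Suc mul_mem_span_bpow_monomials[where r=1]
    by (intro span_minimal subspace_span) auto
  ultimately show ?case
    by (simp add: sp_sum_def span_minimal)
qed

lemma bpow_monomial_mem_sp_prod:
  assumes "bpow_monomial I k x"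
  shows "\<exists>rs. rs \<noteq> [] \<and> (\<forall>r\<in>set rs. 0 < r) \<and> sum_list rs = k \<and>
    x \<in> sp_prod scale mul (map (bpow scale n br I) rs)"
  using assms
proof induction
  case (factor r x)
  then show ?case
    by (intro exI[of _ "[r]"]) simp
next
  case (mul m x r y)
  then obtain rs where rs: "rs \<noteq> []" "\<forall>r\<in>set rs. 0 < r" "sum_list rs = m"
    and x: "x \<in> sp_prod scale mul (map (bpow scale n br I) rs)"
    by blast
  then have "mul x y \<in> sp_prod scale mul (map (bpow scale n br I) (rs @ [r]))"
    using mul.hyps(3) by (simp add: sp_prod_snoc mul_mem_sp_mul)
  with rs mul.hyps(2) show ?case
    by (intro exI[of _ "rs @ [r]"]) simp
qed

lemma bpow_monomial_mem_rterms:
  assumes "bpow_monomial I k x"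
  shows "x \<in> \<Union>{rterm scale mul n br I rs | rs. rs \<noteq> [] \<and> sum_list rs = k}"
proof -
  obtain rs where rs: "\<forall>r\<in>set rs. 0 < r" "sum_list rs = k"
    and "x \<in> sp_prod scale mul (map (bpow scale n br I) rs)"
    using bpow_monomial_mem_sp_prod[OF assms] by blast
  moreover have "filter (\<lambda>r. r \<noteq> 0) rs = rs"
    using rs(1) by (simp add: filter_id_conv)
  ultimately have "x \<in> rterm scale mul n br I (0 # rs)"
    by simp
  moreover have "rterm scale mul n br I (0 # rs) \<in>
      {rterm scale mul n br I rs | rs. rs \<noteq> [] \<and> sum_list rs = k}"
    using rs(2) by (intro CollectI exI[of _ "0 # rs"]) simp
  ultimately show ?thesis
    by (rule UnionI[rotated])
qed

end

theorem lemma5p3: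
  fixes scale :: "'k::field \<Rightarrow> 'v::ab_group_add \<Rightarrow> 'v"
    and mul :: "'v \<Rightarrow> 'v \<Rightarrow> 'v"
    and br :: "'v list \<Rightarrow> 'v"
    and n k :: nat
    and I :: "'v set"
  assumes "poisson_nlie scale mul n br"
    and "n \<ge> 2"
    and "is_ideal scale mul n br I"
    and "k \<ge> 1"
  shows "lcs scale mul n br I k \<subseteq>
    module.span scale (\<Union>{rterm scale mul n br I rs | rs. rs \<noteq> [] \<and> sum_list rs = k})"
proof -
  interpret poisson_nlie_algebra scale mul n br
    using assms(1,2) by (rule poisson_nlie_algebra.intro)
  obtain m where k: "k = Suc m"
    using assms(4) by (cases k) simp_all
  have "lcs scale mul n br I k \<subseteq> span {x. bpow_monomial I k x}"
    unfolding k by (rule lcs_subset_span_bpow_monomials)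
  also have "\<dots> \<subseteq> span (\<Union>{rterm scale mul n br I rs | rs. rs \<noteq> [] \<and> sum_list rs = k})"
    using bpow_monomial_mem_rterms by (intro span_mono) blast
  finally show ?thesis .
qed

end
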